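(* In the setting described in the context, assume condition (j), condition (jj), (NL1), and the following observability hypothesis: there is a sequence $(\overline T_n)_n$ with $T_{2n}>\overline T_n$ for all $n$, such that for every $n$ and every $T\in(\overline T_n,T_{2n}]$ there is a constant $d_n>0$ (depending on $T$, independent of the data) with $$E_S(t_{2n}+T)\le d_n\int_{t_{2n}}^{t_{2n}+T}\|B_1^*(t)w_t(t)\|_{U_1}^2\,dt$$ for every weak solution $w$ of $w_{tt}+Aw+B_1(t)B_1^*(t)w_t=f(w)$ on $(t_{2n},t_{2n+1})$, $w(t_{2n})=w_0^n\in V$, $w_t(t_{2n})=w_1^n\in H$. Let $\hat d_n=\frac{d_n}{d_n+1}$ with $d_n$ corresponding to $T=T_{2n}$, and let $C_3$ be the embedding constant in $\|u\|_{W_3}^2\le C_3\|u\|_H^2$. If $$\sum_{n=0}^\infty\big[2C_3M_{2n+1}T_{2n+1}+\ln\hat d_n\big]=-\infty,$$ then every solution $u$ of $$u_{tt}(t)+Au(t)+B_1(t)B_1^*(t)u_t(t)-B_3(t)B_3^*(t)u_t(t)=f(u),\ t>0,\qquad u(0)=u_0\in V,\ u_t(0)=u_1\in H,$$ satisfies $E_S(t)\to0$ as $t\to+\infty$.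
   Context: $E_S(t)=\frac12(\|u(t)\|_V^2+\|u_t(t)\|_H^2)-\mathcal F(u(t))$. $H$ is a real Hilbert space, $A:\mathcal D(A)\to H$ a densely defined, self-adjoint, positive, coercive linear operator, $V=\mathcal D(A^{1/2})$ with $\|v\|_V=\|A^{1/2}v\|_H$, $V\hookrightarrow H\equiv H'\hookrightarrow V'$ densely. $U_1,U_3$ are real Hilbert spaces, $B_i(t)\in\mathcal L(U_i,H)$, $i=1,3$, with $B_1^*(t)B_3^*(t)=0$ for $t>0$. There is a sequence $0=t_0<t_1<\cdots$; $I_n=[t_n,t_{n+1})$, $T_n=t_{n+1}-t_n$; $B_3=0$ on $I_{2n}$, $B_1=0$ on $I_{2n+1}$, $B_1\in C^1([t_{2n},t_{2n+1}];\mathcal L(U_1,H))$, $B_3\in C([t_{2n+1},t_{2n+2}];\mathcal L(U_3,H))$. $W_1,W_3$ are Hilbert spaces with $\|u\|_{W_i}^2\le C_i\|u\|_H^2$ for $u\in H$, $i=1,3$. $f:V\to H$ is locally Lipschitz, $\mathcal F:V\to\mathbb R$ with $\mathcal F(0)=0$, $\mathcal F'(u)v=\langle f(u),v\rangle_{V',V}$. (NL1): $sf(s)\le0$ for all $s\in\mathbb R$ (scalar form, $f$ acting pointwise as in the model $f(u)=-|u|^pu$). (j): for every $n$ there are $0<m_{2n}\le M_{2n}$ with $m_{2n}\|u\|_{W_1}^2\le\|B_1^*(t)u\|_{U_1}^2\le M_{2n}\|u\|_{W_1}^2$ for $u\in H$, $t\in I_{2n}$. (jj): there is $M_{2n+1}>0$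 with $\|B_3^*(t)u\|_{U_3}^2\le M_{2n+1}\|u\|_{W_3}^2$ for $u\in H$, $t\in I_{2n+1}$. *)

theory Defs
  imports "HOL-Analysis.Analysis"
begin

text \<open>Gelfand-triple setting: V is a real Hilbert space continuously, injectively and densely
embedded in H via the bounded linear map iota.  The operator A is the one associated with the
V inner product: for v in D(A), <A v, w>_H = <v, w>_V for all w in V; so ||v||_V = ||A^(1/2) v||_H.\<close>

definition Bstar_of :: "('u::real_inner \<Rightarrow>\<^sub>L 'h::real_inner) \<Rightarrow> ('h \<Rightarrow>\<^sub>L 'u) \<Rightarrow> bool" where
  "Bstar_of B Bs \<longleftrightarrow> (\<forall>x y. inner (blinfun_apply B x) y = inner x (blinfun_apply Bs y))"

definition energy :: "('v::real_normed_vector \<Rightarrow> real) \<Rightarrow> (real \<Rightarrow> 'v) \<Rightarrow> (real \<Rightarrow> 'h::real_normed_vector) \<Rightarrow> real \<Rightarrow> real" where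
  "energy F u u' t = (1/2) * ((norm (u t))\<^sup>2 + (norm (u' t))\<^sup>2) - F (u t)"

definition weak_sol ::
  "('v::real_inner \<Rightarrow>\<^sub>L 'h::real_inner) \<Rightarrow> ('v \<Rightarrow> 'h) \<Rightarrow> (real \<Rightarrow> 'h \<Rightarrow> 'h)
   \<Rightarrow> real \<Rightarrow> real \<Rightarrow> (real \<Rightarrow> 'v) \<Rightarrow> (real \<Rightarrow> 'h) \<Rightarrow> bool" where
  "weak_sol \<iota> f D a b w w' \<longleftrightarrow>
     a \<le> b \<and> continuous_on {a..b} w \<and> continuous_on {a..b} w' \<and>
     (\<forall>\<tau>\<in>{a..b}. ((\<lambda>s. blinfun_apply \<iota> (w s)) has_vector_derivative w' \<tau>) (at \<tau> within {a..b})) \<and>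
     (\<forall>v s t. a \<le> s \<longrightarrow> s \<le> t \<longrightarrow> t \<le> b \<longrightarrow>
        ((\<lambda>\<tau>. - inner (w \<tau>) v - inner (D \<tau> (w' \<tau>)) (blinfun_apply \<iota> v)
               + inner (f (w \<tau>)) (blinfun_apply \<iota> v))
          has_integral (inner (w' t) (blinfun_apply \<iota> v) - inner (w' s) (blinfun_apply \<iota> v))) {s..t})"

end

(* On a damped interval [t_2n, t_2n+1) the energy identity E(t) = E(t_2n) - \<integral> |B1* u_t|^2 combined
   with the observability inequality gives E(t_2n+1) \<le> d_n/(d_n+1) E(t_2n), and E is nonincreasing
   there.  On an anti-damped interval E' = |B3* u_t|^2 \<le> 2 C3 M_2n+1 E, so by Gronwall the energy grows
   at most by the factor exp(2 C3 M_2n+1 T_2n+1), and stays below its value at the right end.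
   Hence E(t_2n) \<le> exp (\<Sum>k<n. 2 C3 M_2k+1 T_2k+1 + ln d_k/(d_k+1)) E(0) \<longrightarrow> 0, and every value of E
   is dominated by one of these samples.
   Since a weak solution only has u_t \<in> C(H), the energy identity is first proved for the Steklov
   means (1/h) \<integral>_t^t+h of u and u_t, which are differentiable in time, and then h \<longrightarrow> 0. *)

theory Submission
  imports Defs
begin

hide_const (open) Polynomial.content

section \<open>Integration of functions with values in a complete inner product space\<close>

text \<open>The integration library needs codomains of class \<open>banach\<close>, which a type variable of sort
  \<open>{real_inner, complete_space}\<close> is not; integrals are therefore transported along the isometric
  embedding \<open>x \<mapsto> \<langle>x, \<cdot>\<rangle>\<close> into the dual space, which is complete.\<close>

lemma norm_blinfun_inner_right [simp]: "norm (blinfun_inner_right x) = norm x"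
proof (rule antisym)
  show "norm (blinfun_inner_right x) \<le> norm x"
    by (rule norm_blinfun_bound) (auto simp: Cauchy_Schwarz_ineq2)
  have "norm x * norm x = blinfun_inner_right x x"
    by (simp add: power2_eq_square[symmetric] power2_norm_eq_inner)
  also have "\<dots> \<le> norm (blinfun_inner_right x) * norm x"
    using norm_blinfun[of "blinfun_inner_right x" x] by simp
  finally show "norm x \<le> norm (blinfun_inner_right x)"
    by (cases "x = 0") (auto simp: mult_le_cancel_right)
qed

lemmas linear_blinfun_inner_right = bounded_linear.linear[OF bounded_linear_blinfun_inner_right]

lemmas continuous_on_blinfun_inner_right =
  bounded_linear.continuous_on[OF bounded_linear_blinfun_inner_right]

lemma blinfun_inner_right_eq_iff [simp]: "blinfun_inner_right x = blinfun_inner_right y \<longleftrightarrow> x = y"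
proof
  assume "blinfun_inner_right x = blinfun_inner_right y"
  then have "norm (blinfun_inner_right (x - y)) = 0"
    by (simp add: linear_diff[OF linear_blinfun_inner_right])
  then show "x = y" by simp
qed simp

lemma blinfun_inner_right_riemann_sum:
  "blinfun_inner_right (\<Sum>(x, k)\<in>\<D>. content k *\<^sub>R f x) = (\<Sum>(x, k)\<in>\<D>. content k *\<^sub>R blinfun_inner_right (f x))"
  unfolding case_prod_unfold
  by (simp add: linear_sum[OF linear_blinfun_inner_right] linear_scale[OF linear_blinfun_inner_right] o_def)

lemma has_integral_blinfun_inner_right_iff:
  fixes f :: "real \<Rightarrow> 'a::real_inner"
  shows "((\<lambda>x. blinfun_inner_right (f x)) has_integral blinfun_inner_right y) {a..b}
           \<longleftrightarrow> (f has_integral y) {a..b}"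
proof -
  have eq: "norm ((\<Sum>(x, k)\<in>\<D>. content k *\<^sub>R blinfun_inner_right (f x)) - blinfun_inner_right y)
      = norm ((\<Sum>(x, k)\<in>\<D>. content k *\<^sub>R f x) - y)" for \<D>
    by (simp add: blinfun_inner_right_riemann_sum[symmetric]
        linear_diff[OF linear_blinfun_inner_right, symmetric])
  show ?thesis
    unfolding has_integral_real eq ..
qed

lemma integrable_on_blinfun_inner_right:
  fixes f :: "real \<Rightarrow> 'a::{real_inner,complete_space}"
  assumes "(\<lambda>x. blinfun_inner_right (f x)) integrable_on {a..b}"
  shows "f integrable_on {a..b}"
proof -
  obtain \<Phi> where \<Phi>: "((\<lambda>x. blinfun_inner_right (f x)) has_integral \<Phi>) {a..b}"
    using assms by blast
  have "complete (range (blinfun_inner_right :: 'a \<Rightarrow> _))"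
    by (intro complete_isometric_image[OF zero_less_one subspace_UNIV
          bounded_linear_blinfun_inner_right _ complete_UNIV]) simp
  then have closed: "closed (range (blinfun_inner_right :: 'a \<Rightarrow> _))"
    by (rule complete_imp_closed)
  have "\<Phi> \<in> closure (range blinfun_inner_right)"
    unfolding closure_approachable
  proof (intro allI impI)
    fix e :: real assume "e > 0"
    then obtain \<gamma> where "gauge \<gamma>" and \<gamma>: "\<And>\<D>. \<D> tagged_division_of {a..b} \<Longrightarrow> \<gamma> fine \<D> \<Longrightarrow>
        norm ((\<Sum>(x, k)\<in>\<D>. content k *\<^sub>R blinfun_inner_right (f x)) - \<Phi>) < e"
      using \<Phi> unfolding has_integral_real by meson
    obtain \<D> where "\<D> tagged_division_of {a..b}" "\<gamma> fine \<D>"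
      using fine_division_exists_real[OF \<open>gauge \<gamma>\<close>] by blast
    then have "dist (blinfun_inner_right (\<Sum>(x, k)\<in>\<D>. content k *\<^sub>R f x)) \<Phi> < e"
      using \<gamma> by (simp only: blinfun_inner_right_riemann_sum dist_norm)
    then show "\<exists>y\<in>range blinfun_inner_right. dist y \<Phi> < e" by blast
  qed
  then have "\<Phi> \<in> range blinfun_inner_right"
    using closed by (simp add: closure_closed)
  then obtain y where "\<Phi> = blinfun_inner_right y" ..
  with \<Phi> have "(f has_integral y) {a..b}"
    by (simp add: has_integral_blinfun_inner_right_iff)
  then show ?thesis by blast
qed

lemma integral_blinfun_inner_right:
  "f integrable_on S \<Longrightarrow> integral S (\<lambda>x. blinfun_inner_right (f x)) = blinfun_inner_right (integral S f)"
  using integral_linear[OF _ bounded_linear_blinfun_inner_right] by (simp add: o_def)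

lemma integrable_continuous_real_hilbert:
  fixes g :: "real \<Rightarrow> 'a::{real_inner,complete_space}"
  assumes "continuous_on {a..b} g"
  shows "g integrable_on {a..b}"
  by (intro integrable_on_blinfun_inner_right integrable_continuous_real
      continuous_on_blinfun_inner_right[OF assms])

lemma fundamental_theorem_of_calculus_hilbert:
  fixes f :: "real \<Rightarrow> 'a::{real_inner,complete_space}"
  assumes "a \<le> b" "\<And>x. x \<in> {a..b} \<Longrightarrow> (f has_vector_derivative f' x) (at x within {a..b})"
  shows "(f' has_integral (f b - f a)) {a..b}"
proof -
  have "((\<lambda>x. blinfun_inner_right (f' x)) has_integral
      (blinfun_inner_right (f b) - blinfun_inner_right (f a))) {a..b}"
    by (intro fundamental_theorem_of_calculus[OF assms(1)]
        bounded_linear.has_vector_derivative[OF bounded_linear_blinfun_inner_right assms(2)])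
  then show ?thesis
    by (simp only: linear_diff[OF linear_blinfun_inner_right, symmetric]
        has_integral_blinfun_inner_right_iff)
qed

lemma integral_combine_hilbert:
  fixes g :: "real \<Rightarrow> 'a::{real_inner,complete_space}"
  assumes "a \<le> c" "c \<le> b" "continuous_on {a..b} g"
  shows "integral {a..c} g + integral {c..b} g = integral {a..b} g"
proof -
  have "continuous_on {a..c} g" "continuous_on {c..b} g"
    using assms by (auto intro: continuous_on_subset)
  then have int: "g integrable_on {a..c}" "g integrable_on {c..b}" "g integrable_on {a..b}"
    using assms(3) by (auto intro: integrable_continuous_real_hilbert)
  have "blinfun_inner_right (integral {a..c} g + integral {c..b} g)
      = integral {a..c} (\<lambda>x. blinfun_inner_right (g x)) + integral {c..b} (\<lambda>x. blinfun_inner_right (g x))"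
    by (simp only: integral_blinfun_inner_right[OF int(1)] integral_blinfun_inner_right[OF int(2)]
        linear_add[OF linear_blinfun_inner_right])
  also have "\<dots> = integral {a..b} (\<lambda>x. blinfun_inner_right (g x))"
    by (intro Henstock_Kurzweil_Integration.integral_combine assms integrable_continuous_real
        continuous_on_blinfun_inner_right[OF assms(3)])
  also have "\<dots> = blinfun_inner_right (integral {a..b} g)"
    by (rule integral_blinfun_inner_right[OF int(3)])
  finally show ?thesis
    by (rule iffD1[OF blinfun_inner_right_eq_iff])
qed

lemma has_vector_derivative_blinfun_inner_right_iff:
  fixes f :: "real \<Rightarrow> 'a::real_inner"
  shows "((\<lambda>x. blinfun_inner_right (f x)) has_vector_derivative blinfun_inner_right v) (at x within S)
           \<longleftrightarrow> (f has_vector_derivative v) (at x within S)"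
proof -
  define q where "q y = (1 / norm (y - x)) *\<^sub>R (f y - (f x + (y - x) *\<^sub>R v))" for y
  have "(1 / norm (y - x)) *\<^sub>R (blinfun_inner_right (f y)
          - (blinfun_inner_right (f x) + (y - x) *\<^sub>R blinfun_inner_right v))
      = blinfun_inner_right (q y)" for y
    unfolding q_def
    by (simp add: linear_diff[OF linear_blinfun_inner_right] linear_add[OF linear_blinfun_inner_right]
        linear_scale[OF linear_blinfun_inner_right])
  moreover have "((\<lambda>y. blinfun_inner_right (q y)) \<longlongrightarrow> 0) (at x within S) \<longleftrightarrow> (q \<longlongrightarrow> 0) (at x within S)"
    by (subst (1 2) tendsto_norm_zero_iff[symmetric]) simp
  ultimately show ?thesis
    unfolding has_vector_derivative_def has_derivative_within q_def
    by (simp add: bounded_linear_scaleR_left)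
qed

lemma integral_has_vector_derivative_hilbert:
  fixes g :: "real \<Rightarrow> 'a::{real_inner,complete_space}"
  assumes "continuous_on {a..b} g" "x \<in> {a..b}"
  shows "((\<lambda>u. integral {a..u} g) has_vector_derivative g x) (at x within {a..b})"
proof -
  have "((\<lambda>u. integral {a..u} (\<lambda>x. blinfun_inner_right (g x))) has_vector_derivative
      blinfun_inner_right (g x)) (at x within {a..b})"
    by (intro integral_has_vector_derivative assms
        continuous_on_blinfun_inner_right[OF assms(1)])
  moreover have "integral {a..u} (\<lambda>x. blinfun_inner_right (g x)) = blinfun_inner_right (integral {a..u} g)"
    if "u \<in> {a..b}" for u
    using that assms(1)
    by (intro integral_blinfun_inner_right integrable_continuous_real_hilbert)
      (auto intro: continuous_on_subset)
  ultimately have "((\<lambda>u. blinfun_inner_right (integral {a..u} g)) has_vector_derivative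
      blinfun_inner_right (g x)) (at x within {a..b})"
    by (rule has_vector_derivative_transform_within[OF _ zero_less_one assms(2)]) auto
  then show ?thesis
    by (simp add: has_vector_derivative_blinfun_inner_right_iff)
qed

lemma has_integral_of_uniform_limit:
  fixes \<phi> :: "'i \<Rightarrow> real \<Rightarrow> 'a::real_normed_vector"
  assumes "F \<noteq> bot" and \<phi>: "\<forall>\<^sub>F h in F. (\<phi> h has_integral I h) {a..b}"
    and lim: "uniform_limit {a..b} \<phi> \<psi> F" and I: "(I \<longlongrightarrow> J) F"
    and \<psi>: "\<psi> integrable_on {a..b}"
  shows "(\<psi> has_integral J) {a..b}"
proof -
  have "(I \<longlongrightarrow> integral {a..b} \<psi>) F"
  proof (rule tendstoI)
    fix e :: real assume "e > 0"
    define c where "c = content {a..b}"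
    define \<epsilon> where "\<epsilon> = e / (2 * (c + 1))"
    have "c \<ge> 0" by (simp add: c_def)
    then have "\<epsilon> > 0"
      using \<open>e > 0\<close> by (simp add: \<epsilon>_def)
    have "\<epsilon> * c = e / 2 * (c / (c + 1))"
      by (simp add: \<epsilon>_def)
    also have "\<dots> \<le> e / 2"
      using \<open>e > 0\<close> \<open>c \<ge> 0\<close> by (intro mult_left_le) auto
    also have "\<dots> < e"
      using \<open>e > 0\<close> by simp
    finally have "\<epsilon> * c < e" .
    show "\<forall>\<^sub>F h in F. dist (I h) (integral {a..b} \<psi>) < e"
      using \<phi> uniform_limitD[OF lim \<open>\<epsilon> > 0\<close>]
    proof eventually_elim
      case (elim h)
      have "((\<lambda>\<tau>. \<phi> h \<tau> - \<psi> \<tau>) has_integral (I h - integral {a..b} \<psi>)) (cbox a b)"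
        using has_integral_diff[OF elim(1) integrable_integral[OF \<psi>]] by simp
      then have "norm (I h - integral {a..b} \<psi>) \<le> \<epsilon> * content (cbox a b)"
        using \<open>\<epsilon> > 0\<close> elim(2)
        by (intro has_integral_bound[where f = "\<lambda>\<tau>. \<phi> h \<tau> - \<psi> \<tau>"]) (auto simp: dist_norm less_imp_le)
      with \<open>\<epsilon> * c < e\<close> show ?case by (simp add: dist_norm c_def)
    qed
  qed
  then have "J = integral {a..b} \<psi>"
    by (rule tendsto_unique[OF \<open>F \<noteq> bot\<close> I])
  with \<psi> show ?thesis
    using integrable_integral by blast
qed

lemma bounded_image_Icc_subset:
  fixes g :: "real \<Rightarrow> 'a::metric_space"
  assumes "continuous_on {a..b} g" "a \<le> s" "t \<le> b"
  shows "bounded (g ` {s..t})"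
proof (intro compact_imp_bounded compact_continuous_image)
  show "continuous_on {s..t} g"
    by (rule continuous_on_subset[OF assms(1)]) (use assms in auto)
qed simp

lemma has_integral_inner_left:
  fixes g :: "real \<Rightarrow> 'a::real_inner"
  shows "(g has_integral I) S \<Longrightarrow> ((\<lambda>\<sigma>. inner (g \<sigma>) c) has_integral inner I c) S"
  using has_integral_linear[OF _ bounded_linear_inner_left] by (simp add: o_def)

lemma has_vector_derivative_power2_norm:
  fixes y :: "real \<Rightarrow> 'a::real_inner"
  assumes "(y has_vector_derivative y') (at x within S)"
  shows "((\<lambda>\<tau>. (norm (y \<tau>))\<^sup>2) has_vector_derivative 2 * inner (y x) y') (at x within S)"
  using bounded_bilinear.has_vector_derivative[OF bounded_bilinear_inner assms assms]
  by (simp add: power2_norm_eq_inner inner_commute)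

lemma lipschitz_on_cballI:
  fixes f :: "'a::real_normed_vector \<Rightarrow> 'b::real_normed_vector"
  assumes "\<forall>x y. norm (x::'a) \<le> R \<longrightarrow> norm y \<le> R \<longrightarrow> norm (f x - f y) \<le> L * norm (x - y)"
  shows "(max L 0)-lipschitz_on (cball 0 R) f"
proof (rule lipschitz_onI)
  fix x y :: 'a assume "x \<in> cball 0 R" "y \<in> cball 0 R"
  with assms have "norm (f x - f y) \<le> L * norm (x - y)" by auto
  also have "\<dots> \<le> max L 0 * norm (x - y)" by (intro mult_right_mono) auto
  finally show "dist (f x) (f y) \<le> max L 0 * dist x y" by (simp add: dist_norm)
qed simp

lemma continuous_on_UNIV_of_lipschitz_on_cball:
  fixes f :: "'a::real_normed_vector \<Rightarrow> 'b::real_normed_vector"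
  assumes "\<And>R. \<exists>L. L-lipschitz_on (cball 0 R) f"
  shows "continuous_on UNIV f"
proof -
  have "isCont f x" for x
  proof -
    obtain L where "L-lipschitz_on (cball 0 (norm x + 1)) f"
      using assms by blast
    then have "continuous_on (ball 0 (norm x + 1)) f"
      by (rule continuous_on_subset[OF lipschitz_on_continuous_on ball_subset_cball])
    then show ?thesis
      by (simp add: continuous_on_eq_continuous_at)
  qed
  then show ?thesis
    by (simp add: continuous_at_imp_continuous_on)
qed

lemma Bstar_of_norm_le:
  assumes "Bstar_of B Bs"
  shows "norm (Bs y) \<le> norm B * norm y"
proof -
  have "norm (Bs y) * norm (Bs y) = inner (B (Bs y)) y"
    using assms by (simp add: Bstar_of_def power2_norm_eq_inner[symmetric] power2_eq_square)
  also have "\<dots> \<le> norm (B (Bs y)) * norm y"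
    by (rule norm_cauchy_schwarz)
  also have "\<dots> \<le> (norm B * norm (Bs y)) * norm y"
    by (rule mult_right_mono[OF norm_blinfun norm_ge_zero])
  finally have "norm (Bs y) * norm (Bs y) \<le> (norm B * norm y) * norm (Bs y)"
    by (simp only: mult_ac)
  then show ?thesis
    by (cases "Bs y = 0") (simp_all add: mult_le_cancel_right)
qed

lemma Bstar_of_diff:
  "Bstar_of B1 Bs1 \<Longrightarrow> Bstar_of B2 Bs2 \<Longrightarrow> Bstar_of (B1 - B2) (Bs1 - Bs2)"
  unfolding Bstar_of_def by (simp add: blinfun.diff_left inner_diff_left inner_diff_right)

lemma continuous_on_Bstar_of:
  fixes P :: "'a::metric_space \<Rightarrow> ('u::real_inner \<Rightarrow>\<^sub>L 'h::real_inner)"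
  assumes "continuous_on S P" "\<And>\<sigma>. \<sigma> \<in> S \<Longrightarrow> Bstar_of (P \<sigma>) (Ps \<sigma>)"
  shows "continuous_on S Ps"
  unfolding continuous_on_iff
proof (intro ballI allI impI)
  fix x e assume "x \<in> S" "(e::real) > 0"
  then obtain d where "d > 0" and d: "\<And>y. y \<in> S \<Longrightarrow> dist y x < d \<Longrightarrow> dist (P y) (P x) < e"
    using assms(1) unfolding continuous_on_iff by meson
  have "dist (Ps y) (Ps x) < e" if "y \<in> S" "dist y x < d" for y
  proof -
    have "norm (Ps y - Ps x) \<le> norm (P y - P x)"
      using Bstar_of_norm_le[OF Bstar_of_diff[OF assms(2) assms(2)]] \<open>x \<in> S\<close> that
      by (intro norm_blinfun_bound) auto
    with d[OF that] show ?thesis by (simp add: dist_norm)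
  qed
  with \<open>d > 0\<close> show "\<exists>d>0. \<forall>y\<in>S. dist y x < d \<longrightarrow> dist (Ps y) (Ps x) < e" by blast
qed

section \<open>Steklov means\<close>

definition steklov_mean :: "real \<Rightarrow> (real \<Rightarrow> 'a::real_normed_vector) \<Rightarrow> real \<Rightarrow> 'a" where
  "steklov_mean h g \<tau> = (1/h) *\<^sub>R integral {\<tau>..\<tau>+h} g"

lemma steklov_mean_uniform_limit:
  fixes g :: "real \<Rightarrow> 'a::{real_inner,complete_space}"
  assumes g: "continuous_on {a..b} g" and "a \<le> s" "t < b"
  shows "uniform_limit {s..t} (\<lambda>h. steklov_mean h g) g (at_right 0)"
proof (rule uniform_limitI)
  fix e :: real assume "e > 0"
  have "uniformly_continuous_on {a..b} g"
    using g compact_uniformly_continuous by blast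
  then obtain \<delta> where "\<delta> > 0"
    and \<delta>: "\<And>x y. x \<in> {a..b} \<Longrightarrow> y \<in> {a..b} \<Longrightarrow> dist y x < \<delta> \<Longrightarrow> dist (g y) (g x) < e / 2"
    unfolding uniformly_continuous_on_def using \<open>e > 0\<close> by (metis half_gt_zero)
  have "\<forall>\<^sub>F h in at_right 0. h \<in> {0<..<min \<delta> (b - t)}"
    by (rule eventually_at_right_real) (use \<open>\<delta> > 0\<close> \<open>t < b\<close> in auto)
  then show "\<forall>\<^sub>F h in at_right 0. \<forall>\<tau>\<in>{s..t}. dist (steklov_mean h g \<tau>) (g \<tau>) < e"
  proof eventually_elim
    case (elim h)
    show ?case
    proof
      fix \<tau> assume "\<tau> \<in> {s..t}"
      then have sub: "{\<tau>..\<tau>+h} \<subseteq> {a..b}" using elim assms by auto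
      have "((\<lambda>\<sigma>. g \<sigma> - g \<tau>) has_integral (integral {\<tau>..\<tau>+h} g - h *\<^sub>R g \<tau>)) {\<tau>..\<tau>+h}"
        using elim has_integral_const_real[of "g \<tau>" \<tau> "\<tau>+h"]
        by (intro has_integral_diff integrable_integral integrable_continuous_real_hilbert
            continuous_on_subset[OF g sub]) auto
      moreover have "norm (g \<sigma> - g \<tau>) \<le> e / 2" if "\<sigma> \<in> cbox \<tau> (\<tau>+h)" for \<sigma>
        using \<delta>[of \<tau> \<sigma>] that sub elim \<open>\<tau> \<in> {s..t}\<close> assms by (auto simp: dist_norm dist_real_def)
      ultimately have "norm (integral {\<tau>..\<tau>+h} g - h *\<^sub>R g \<tau>) \<le> e / 2 * content (cbox \<tau> (\<tau>+h))"
        using \<open>e > 0\<close> by (intro has_integral_bound[where f = "\<lambda>\<sigma>. g \<sigma> - g \<tau>"]) auto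
      moreover have "steklov_mean h g \<tau> - g \<tau> = (1/h) *\<^sub>R (integral {\<tau>..\<tau>+h} g - h *\<^sub>R g \<tau>)"
        using elim by (simp add: steklov_mean_def algebra_simps)
      then have "dist (steklov_mean h g \<tau>) (g \<tau>) = norm (integral {\<tau>..\<tau>+h} g - h *\<^sub>R g \<tau>) / h"
        using elim by (simp add: dist_norm)
      ultimately have "dist (steklov_mean h g \<tau>) (g \<tau>) \<le> e / 2"
        using elim by (simp add: divide_le_eq)
      then show "dist (steklov_mean h g \<tau>) (g \<tau>) < e"
        using \<open>e > 0\<close> by simp
    qed
  qed
qed

lemma has_vector_derivative_steklov_mean:
  fixes g :: "real \<Rightarrow> 'a::{real_inner,complete_space}"
  assumes g: "continuous_on {a..b} g" and "a \<le> s" "t + h \<le> b" "0 < h" "\<tau> \<in> {s..t}"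
  shows "(steklov_mean h g has_vector_derivative (1/h) *\<^sub>R (g (\<tau>+h) - g \<tau>)) (at \<tau> within {s..t})"
proof -
  define G where "G x = integral {a..x} g" for x
  have eq: "steklov_mean h g x = (1/h) *\<^sub>R (G (x+h) - G x)" if "x \<in> {s..t}" for x
  proof -
    have "continuous_on {a..x+h} g"
      using that assms by (auto intro: continuous_on_subset[OF g])
    from integral_combine_hilbert[OF _ _ this, of x] that assms
    have "integral {x..x+h} g = G (x+h) - G x" by (simp add: G_def algebra_simps)
    then show ?thesis by (simp add: steklov_mean_def)
  qed
  have "(G has_vector_derivative g (\<tau>+h)) (at (\<tau>+h) within {a..b})"
    unfolding G_def using assms by (intro integral_has_vector_derivative_hilbert[OF g]) auto
  then have "(G has_vector_derivative g (\<tau>+h)) (at (\<tau>+h) within (\<lambda>x. x + h) ` {s..t})"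
    by (rule has_vector_derivative_within_subset) (use assms in auto)
  then have "((\<lambda>x. G (x + h)) has_vector_derivative g (\<tau>+h)) (at \<tau> within {s..t})"
    using vector_diff_chain_within[of "\<lambda>x. x + h" 1 \<tau> "{s..t}" G "g (\<tau>+h)"]
    by (simp add: o_def has_vector_derivative_add_const)
  moreover have "(G has_vector_derivative g \<tau>) (at \<tau> within {s..t})"
    unfolding G_def using assms
    by (intro has_vector_derivative_within_subset[OF integral_has_vector_derivative_hilbert[OF g]]) auto
  ultimately have "((\<lambda>x. (1/h) *\<^sub>R (G (x + h) - G x)) has_vector_derivative
      (1/h) *\<^sub>R (g (\<tau>+h) - g \<tau>)) (at \<tau> within {s..t})"
    by (intro bounded_linear.has_vector_derivative[OF bounded_linear_scaleR_right]
        has_vector_derivative_diff)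
  then show ?thesis
    by (rule has_vector_derivative_transform_within[OF _ zero_less_one assms(5)]) (use eq in auto)
qed

lemma steklov_mean_of_derivative:
  fixes \<iota> :: "'v::real_normed_vector \<Rightarrow>\<^sub>L 'h::{real_inner,complete_space}"
  assumes der: "\<And>\<tau>. \<tau> \<in> {a..b} \<Longrightarrow> ((\<lambda>\<sigma>. \<iota> (w \<sigma>)) has_vector_derivative w' \<tau>) (at \<tau> within {a..b})"
    and "a \<le> \<tau>" "0 < h" "\<tau> + h \<le> b"
  shows "steklov_mean h w' \<tau> = \<iota> ((1/h) *\<^sub>R (w (\<tau>+h) - w \<tau>))"
proof -
  have sub: "{\<tau>..\<tau>+h} \<subseteq> {a..b}" using assms by auto
  have "(w' has_integral (\<iota> (w (\<tau>+h)) - \<iota> (w \<tau>))) {\<tau>..\<tau>+h}"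
    using assms by (intro fundamental_theorem_of_calculus_hilbert
        has_vector_derivative_within_subset[OF der sub]) auto
  then show ?thesis
    by (simp add: steklov_mean_def integral_unique blinfun.scaleR_right blinfun.diff_right)
qed

section \<open>Energy identities for weak solutions\<close>

definition quadratic_energy :: "'v::real_normed_vector \<Rightarrow> 'h::real_normed_vector \<Rightarrow> real" where
  "quadratic_energy x y = (1/2) * ((norm x)\<^sup>2 + (norm y)\<^sup>2)"

lemma energy_eq_quadratic_energy: "energy F u u' t = quadratic_energy (u t) (u' t) - F (u t)"
  by (simp add: energy_def quadratic_energy_def)

lemma weak_solD:
  assumes "weak_sol \<iota> f D a b w w'"
  shows "a \<le> b" "continuous_on {a..b} w" "continuous_on {a..b} w'"
    and "\<And>\<tau>. \<tau> \<in> {a..b} \<Longrightarrow> ((\<lambda>\<sigma>. \<iota> (w \<sigma>)) has_vector_derivative w' \<tau>) (at \<tau> within {a..b})"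
    and "\<And>v s t. a \<le> s \<Longrightarrow> s \<le> t \<Longrightarrow> t \<le> b \<Longrightarrow>
      ((\<lambda>\<sigma>. - inner (w \<sigma>) v + inner (f (w \<sigma>) - D \<sigma> (w' \<sigma>)) (\<iota> v)) has_integral
         (inner (w' t) (\<iota> v) - inner (w' s) (\<iota> v))) {s..t}"
proof -
  show "a \<le> b" "continuous_on {a..b} w" "continuous_on {a..b} w'"
    and "\<And>\<tau>. \<tau> \<in> {a..b} \<Longrightarrow> ((\<lambda>\<sigma>. \<iota> (w \<sigma>)) has_vector_derivative w' \<tau>) (at \<tau> within {a..b})"
    using assms unfolding weak_sol_def by auto
  fix v s t assume "a \<le> s" "s \<le> t" "t \<le> b"
  moreover have "(\<lambda>\<sigma>. - inner (w \<sigma>) v + inner (f (w \<sigma>) - D \<sigma> (w' \<sigma>)) (\<iota> v))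
      = (\<lambda>\<sigma>. - inner (w \<sigma>) v - inner (D \<sigma> (w' \<sigma>)) (\<iota> v) + inner (f (w \<sigma>)) (\<iota> v))"
    by (simp add: fun_eq_iff inner_diff_left)
  ultimately show "((\<lambda>\<sigma>. - inner (w \<sigma>) v + inner (f (w \<sigma>) - D \<sigma> (w' \<sigma>)) (\<iota> v)) has_integral
      (inner (w' t) (\<iota> v) - inner (w' s) (\<iota> v))) {s..t}"
    using assms unfolding weak_sol_def by simp
qed

lemma weak_sol_subinterval:
  assumes sol: "weak_sol \<iota> f D a b u u'" and "a \<le> a'" "a' \<le> b'" "b' \<le> b"
    and D': "\<And>\<sigma> x. \<sigma> \<in> {a'..<b'} \<Longrightarrow> D' \<sigma> x = D \<sigma> x"
  shows "weak_sol \<iota> f D' a' b' u u'"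
  unfolding weak_sol_def
proof (intro conjI ballI allI impI)
  have sub: "{a'..b'} \<subseteq> {a..b}" using assms by auto
  note W = sol[unfolded weak_sol_def]
  note weak = W[THEN conjunct2, THEN conjunct2, THEN conjunct2, THEN conjunct2, rule_format]
  show "a' \<le> b'" by fact
  show "continuous_on {a'..b'} u" "continuous_on {a'..b'} u'"
    using W continuous_on_subset[OF _ sub] by blast+
  show "((\<lambda>\<sigma>. \<iota> (u \<sigma>)) has_vector_derivative u' \<tau>) (at \<tau> within {a'..b'})"
    if "\<tau> \<in> {a'..b'}" for \<tau>
    using W that sub has_vector_derivative_within_subset[OF _ sub] by blast
  fix v s t assume st: "a' \<le> s" "s \<le> t" "t \<le> b'"
  show "((\<lambda>\<tau>. - inner (u \<tau>) v - inner (D' \<tau> (u' \<tau>)) (\<iota> v) + inner (f (u \<tau>)) (\<iota> v))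
      has_integral (inner (u' t) (\<iota> v) - inner (u' s) (\<iota> v))) {s..t}"
  proof (rule has_integral_spike_finite[of "{b'}"])
    show "((\<lambda>\<tau>. - inner (u \<tau>) v - inner (D \<tau> (u' \<tau>)) (\<iota> v) + inner (f (u \<tau>)) (\<iota> v))
        has_integral (inner (u' t) (\<iota> v) - inner (u' s) (\<iota> v))) {s..t}"
      by (rule weak) (use st assms(2,4) in auto)
  qed (use st D' in auto)
qed

lemma weak_sol_steklov_energy_identity:
  fixes \<iota> :: "'v::{real_inner,complete_space} \<Rightarrow>\<^sub>L 'h::{real_inner,complete_space}"
    and f :: "'v \<Rightarrow> 'h" and D :: "real \<Rightarrow> 'h \<Rightarrow> 'h" and w :: "real \<Rightarrow> 'v" and w' :: "real \<Rightarrow> 'h"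
  defines "k \<equiv> \<lambda>\<sigma>. f (w \<sigma>) - D \<sigma> (w' \<sigma>)"
  assumes sol: "weak_sol \<iota> f D a b w w'" and st: "a \<le> s" "s \<le> t" "0 < h" "t + h \<le> b"
    and ck: "continuous_on {a..b} k"
  shows "((\<lambda>\<tau>. inner (steklov_mean h k \<tau>) (steklov_mean h w' \<tau>)) has_integral
      quadratic_energy (steklov_mean h w t) (steklov_mean h w' t)
      - quadratic_energy (steklov_mean h w s) (steklov_mean h w' s)) {s..t}"
proof -
  note W = weak_solD[OF sol]
  define Y where "Y = steklov_mean h w"
  define Z where "Z = steklov_mean h w'"
  define V where "V \<tau> = (1/h) *\<^sub>R (w (\<tau>+h) - w \<tau>)" for \<tau>
  define Z' where "Z' \<tau> = (1/h) *\<^sub>R (w' (\<tau>+h) - w' \<tau>)" for \<tau>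
  have sub: "{\<tau>..\<tau>+h} \<subseteq> {a..b}" if "\<tau> \<in> {s..t}" for \<tau>
    using that st by auto
  have Z: "Z \<tau> = \<iota> (V \<tau>)" if "\<tau> \<in> {s..t}" for \<tau>
    unfolding Z_def V_def using that st by (intro steklov_mean_of_derivative[OF W(4)]) auto
  have key: "inner (Y \<tau>) (V \<tau>) + inner (Z \<tau>) (Z' \<tau>) = inner (steklov_mean h k \<tau>) (Z \<tau>)"
    if \<tau>: "\<tau> \<in> {s..t}" for \<tau>
  proof -
    \<comment> \<open>the weak equation on \<open>[\<tau>, \<tau>+h]\<close>, tested with \<open>v = V \<tau>\<close>\<close>
    have "((\<lambda>\<sigma>. - inner (w \<sigma>) (V \<tau>) + inner (k \<sigma>) (\<iota> (V \<tau>))) has_integral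
        - inner (integral {\<tau>..\<tau>+h} w) (V \<tau>) + inner (integral {\<tau>..\<tau>+h} k) (\<iota> (V \<tau>))) {\<tau>..\<tau>+h}"
      using sub[OF \<tau>] W(2) ck
      by (intro has_integral_add has_integral_neg has_integral_inner_left integrable_integral
          integrable_continuous_real_hilbert) (auto intro: continuous_on_subset)
    moreover have "((\<lambda>\<sigma>. - inner (w \<sigma>) (V \<tau>) + inner (k \<sigma>) (\<iota> (V \<tau>))) has_integral
        inner (w' (\<tau>+h)) (\<iota> (V \<tau>)) - inner (w' \<tau>) (\<iota> (V \<tau>))) {\<tau>..\<tau>+h}"
      unfolding k_def by (rule W(5)) (use st \<tau> in auto)
    ultimately have "inner (w' (\<tau>+h) - w' \<tau>) (\<iota> (V \<tau>))
        = - inner (integral {\<tau>..\<tau>+h} w) (V \<tau>) + inner (integral {\<tau>..\<tau>+h} k) (\<iota> (V \<tau>))"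
      by (simp add: inner_diff_left has_integral_unique)
    then show ?thesis
      using st by (simp add: Y_def Z'_def Z[OF \<tau>] steklov_mean_def inner_diff_right field_simps inner_commute)
  qed
  have "((\<lambda>\<tau>. quadratic_energy (Y \<tau>) (Z \<tau>)) has_vector_derivative inner (steklov_mean h k \<tau>) (Z \<tau>))
      (at \<tau> within {s..t})" if \<tau>: "\<tau> \<in> {s..t}" for \<tau>
  proof -
    have "(Y has_vector_derivative V \<tau>) (at \<tau> within {s..t})"
      unfolding Y_def V_def using st \<tau> by (intro has_vector_derivative_steklov_mean[OF W(2)]) auto
    moreover have "(Z has_vector_derivative Z' \<tau>) (at \<tau> within {s..t})"
      unfolding Z_def Z'_def using st \<tau> by (intro has_vector_derivative_steklov_mean[OF W(3)]) auto
    ultimately show ?thesis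
      unfolding quadratic_energy_def key[OF \<tau>, symmetric]
      by (auto intro!: derivative_eq_intros has_vector_derivative_power2_norm
          simp: algebra_simps)
  qed
  then have "((\<lambda>\<tau>. inner (steklov_mean h k \<tau>) (Z \<tau>)) has_integral
      (\<lambda>\<tau>. quadratic_energy (Y \<tau>) (Z \<tau>)) t - (\<lambda>\<tau>. quadratic_energy (Y \<tau>) (Z \<tau>)) s) {s..t}"
    by (intro fundamental_theorem_of_calculus[OF st(2)])
  then show ?thesis
    unfolding Y_def Z_def by simp
qed

lemma weak_sol_quadratic_energy_identity:
  fixes \<iota> :: "'v::{real_inner,complete_space} \<Rightarrow>\<^sub>L 'h::{real_inner,complete_space}"
    and f :: "'v \<Rightarrow> 'h" and D :: "real \<Rightarrow> 'h \<Rightarrow> 'h" and w :: "real \<Rightarrow> 'v" and w' :: "real \<Rightarrow> 'h"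
  defines "k \<equiv> \<lambda>\<sigma>. f (w \<sigma>) - D \<sigma> (w' \<sigma>)"
  assumes sol: "weak_sol \<iota> f D a b w w'" and st: "a \<le> s" "s \<le> t" "t < b"
    and ck: "continuous_on {a..b} k"
  shows "((\<lambda>\<sigma>. inner (k \<sigma>) (w' \<sigma>)) has_integral
      quadratic_energy (w t) (w' t) - quadratic_energy (w s) (w' s)) {s..t}"
proof (rule has_integral_of_uniform_limit[OF trivial_limit_at_right_real, where
      \<phi> = "\<lambda>h \<tau>. inner (steklov_mean h k \<tau>) (steklov_mean h w' \<tau>)" and
      I = "\<lambda>h. quadratic_energy (steklov_mean h w t) (steklov_mean h w' t)
             - quadratic_energy (steklov_mean h w s) (steklov_mean h w' s)"])
  note W = weak_solD[OF sol]
  show "\<forall>\<^sub>F h in at_right 0. ((\<lambda>\<tau>. inner (steklov_mean h k \<tau>) (steklov_mean h w' \<tau>)) has_integral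
      quadratic_energy (steklov_mean h w t) (steklov_mean h w' t)
      - quadratic_energy (steklov_mean h w s) (steklov_mean h w' s)) {s..t}"
    using eventually_at_right_real[of 0 "b - t"] st
    by (auto elim!: eventually_mono) (use sol ck in \<open>auto simp: k_def intro!: weak_sol_steklov_energy_identity\<close>)
  show "uniform_limit {s..t} (\<lambda>h \<tau>. inner (steklov_mean h k \<tau>) (steklov_mean h w' \<tau>))
      (\<lambda>\<tau>. inner (k \<tau>) (w' \<tau>)) (at_right 0)"
    using st ck W(3)
    by (intro bounded_bilinear_bounded_uniform_limit_intros steklov_mean_uniform_limit
        bounded_image_Icc_subset[where a = a and b = b]) auto
  show "((\<lambda>h. quadratic_energy (steklov_mean h w t) (steklov_mean h w' t)
      - quadratic_energy (steklov_mean h w s) (steklov_mean h w' s)) \<longlongrightarrow>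
      quadratic_energy (w t) (w' t) - quadratic_energy (w s) (w' s)) (at_right 0)"
    unfolding quadratic_energy_def using st
    by (intro tendsto_intros tendsto_uniform_limitI[OF steklov_mean_uniform_limit[OF W(2)]]
        tendsto_uniform_limitI[OF steklov_mean_uniform_limit[OF W(3)]]) auto
  show "(\<lambda>\<sigma>. inner (k \<sigma>) (w' \<sigma>)) integrable_on {s..t}"
    using st ck W(3)
    by (intro integrable_continuous_real continuous_intros) (auto intro: continuous_on_subset)
qed

lemma steklov_mean_potential_identity:
  fixes \<iota> :: "'v::{real_inner,complete_space} \<Rightarrow>\<^sub>L 'h::{real_inner,complete_space}"
    and w :: "real \<Rightarrow> 'v" and w' :: "real \<Rightarrow> 'h"
  assumes st: "a \<le> s" "s \<le> t" "0 < h" "t + h \<le> b" and cw: "continuous_on {a..b} w"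
    and der: "\<And>\<tau>. \<tau> \<in> {a..b} \<Longrightarrow> ((\<lambda>\<sigma>. \<iota> (w \<sigma>)) has_vector_derivative w' \<tau>) (at \<tau> within {a..b})"
    and F_deriv: "\<And>x. (F has_derivative (\<lambda>v. inner (f x) (\<iota> v))) (at x)"
  shows "((\<lambda>\<tau>. inner (f (steklov_mean h w \<tau>)) (steklov_mean h w' \<tau>)) has_integral
      F (steklov_mean h w t) - F (steklov_mean h w s)) {s..t}"
proof -
  have "((\<lambda>\<tau>. F (steklov_mean h w \<tau>)) has_vector_derivative
      inner (f (steklov_mean h w \<tau>)) (steklov_mean h w' \<tau>)) (at \<tau> within {s..t})"
    if \<tau>: "\<tau> \<in> {s..t}" for \<tau>
  proof -
    define V where "V = (1/h) *\<^sub>R (w (\<tau>+h) - w \<tau>)"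
    have "(steklov_mean h w has_vector_derivative V) (at \<tau> within {s..t})"
      unfolding V_def using st \<tau> by (intro has_vector_derivative_steklov_mean[OF cw]) auto
    then have "((\<lambda>\<tau>. F (steklov_mean h w \<tau>)) has_derivative
        (\<lambda>d. inner (f (steklov_mean h w \<tau>)) (\<iota> (d *\<^sub>R V)))) (at \<tau> within {s..t})"
      unfolding has_vector_derivative_def by (rule has_derivative_compose[OF _ F_deriv])
    moreover have "steklov_mean h w' \<tau> = \<iota> V"
      unfolding V_def using st \<tau> by (intro steklov_mean_of_derivative[OF der]) auto
    ultimately show ?thesis
      by (simp add: has_vector_derivative_def blinfun.scaleR_right)
  qed
  then have "((\<lambda>\<tau>. inner (f (steklov_mean h w \<tau>)) (steklov_mean h w' \<tau>)) has_integral
      (\<lambda>\<tau>. F (steklov_mean h w \<tau>)) t - (\<lambda>\<tau>. F (steklov_mean h w \<tau>)) s) {s..t}"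
    by (intro fundamental_theorem_of_calculus[OF st(2)])
  then show ?thesis by simp
qed

lemma potential_chain_rule:
  fixes \<iota> :: "'v::{real_inner,complete_space} \<Rightarrow>\<^sub>L 'h::{real_inner,complete_space}"
    and w :: "real \<Rightarrow> 'v" and w' :: "real \<Rightarrow> 'h"
  assumes st: "a \<le> s" "s \<le> t" "t < b"
    and cw: "continuous_on {a..b} w" and cw': "continuous_on {a..b} w'"
    and der: "\<And>\<tau>. \<tau> \<in> {a..b} \<Longrightarrow> ((\<lambda>\<sigma>. \<iota> (w \<sigma>)) has_vector_derivative w' \<tau>) (at \<tau> within {a..b})"
    and F_deriv: "\<And>x. (F has_derivative (\<lambda>v. inner (f x) (\<iota> v))) (at x)"
    and lip: "\<And>R. \<exists>L. L-lipschitz_on (cball 0 R) f"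
  shows "((\<lambda>\<sigma>. inner (f (w \<sigma>)) (w' \<sigma>)) has_integral F (w t) - F (w s)) {s..t}"
proof (rule has_integral_of_uniform_limit[OF trivial_limit_at_right_real, where
      \<phi> = "\<lambda>h \<tau>. inner (f (steklov_mean h w \<tau>)) (steklov_mean h w' \<tau>)" and
      I = "\<lambda>h. F (steklov_mean h w t) - F (steklov_mean h w s)"])
  have limw: "uniform_limit {s..t} (\<lambda>h. steklov_mean h w) w (at_right 0)"
    by (rule steklov_mean_uniform_limit[OF cw st(1,3)])
  have cf: "continuous_on UNIV f"
    by (rule continuous_on_UNIV_of_lipschitz_on_cball[OF lip])
  have cfw: "continuous_on {a..b} (\<lambda>\<sigma>. f (w \<sigma>))"
    by (rule continuous_on_compose2[OF cf cw]) auto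
  show "\<forall>\<^sub>F h in at_right 0. ((\<lambda>\<tau>. inner (f (steklov_mean h w \<tau>)) (steklov_mean h w' \<tau>)) has_integral
      F (steklov_mean h w t) - F (steklov_mean h w s)) {s..t}"
    using eventually_at_right_real[of 0 "b - t"] st
    by (auto elim!: eventually_mono) (auto intro!: steklov_mean_potential_identity[OF _ _ _ _ cw der F_deriv])
  obtain R where R: "\<And>\<tau>. \<tau> \<in> {s..t} \<Longrightarrow> norm (w \<tau>) \<le> R"
    using bounded_image_Icc_subset[OF cw st(1) less_imp_le[OF st(3)]]
    unfolding bounded_iff by blast
  obtain L where L: "L-lipschitz_on (cball 0 (R + 1)) f"
    using lip by blast
  have "\<forall>\<^sub>F h in at_right 0. \<forall>\<tau>\<in>{s..t}. steklov_mean h w \<tau> \<in> cball 0 (R + 1)"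
    using uniform_limitD[OF limw zero_less_one]
  proof eventually_elim
    case (elim h)
    show ?case
    proof
      fix \<tau> assume "\<tau> \<in> {s..t}"
      with elim have "norm (steklov_mean h w \<tau> - w \<tau>) < 1"
        by (simp add: dist_norm)
      with R[OF \<open>\<tau> \<in> {s..t}\<close>] show "steklov_mean h w \<tau> \<in> cball 0 (R + 1)"
        using norm_triangle_ineq2[of "steklov_mean h w \<tau>" "w \<tau>"] by simp
    qed
  qed
  then have "uniform_limit {s..t} (\<lambda>h \<tau>. f (steklov_mean h w \<tau>)) (\<lambda>\<tau>. f (w \<tau>)) (at_right 0)"
    by (intro uniform_limit_compose_uniformly_continuous_on[OF limw
          lipschitz_on_uniformly_continuous[OF L]]) auto
  then show "uniform_limit {s..t} (\<lambda>h \<tau>. inner (f (steklov_mean h w \<tau>)) (steklov_mean h w' \<tau>))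
      (\<lambda>\<tau>. inner (f (w \<tau>)) (w' \<tau>)) (at_right 0)"
    using st cfw cw'
    by (intro bounded_bilinear_bounded_uniform_limit_intros steklov_mean_uniform_limit
        bounded_image_Icc_subset[where a = a and b = b]) auto
  have "isCont F x" for x
    using has_derivative_continuous[OF F_deriv] by simp
  then show "((\<lambda>h. F (steklov_mean h w t) - F (steklov_mean h w s)) \<longlongrightarrow> F (w t) - F (w s)) (at_right 0)"
    using st by (intro tendsto_diff isCont_tendsto_compose[where g = F] tendsto_uniform_limitI[OF limw]) auto
  show "(\<lambda>\<sigma>. inner (f (w \<sigma>)) (w' \<sigma>)) integrable_on {s..t}"
    using st cfw cw'
    by (intro integrable_continuous_real continuous_intros) (auto intro: continuous_on_subset)
qed

lemma weak_sol_energy_identity: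
  fixes \<iota> :: "'v::{real_inner,complete_space} \<Rightarrow>\<^sub>L 'h::{real_inner,complete_space}"
    and P :: "real \<Rightarrow> ('p::real_inner \<Rightarrow>\<^sub>L 'h)" and Ps :: "real \<Rightarrow> ('h \<Rightarrow>\<^sub>L 'p)"
    and u :: "real \<Rightarrow> 'v" and u' :: "real \<Rightarrow> 'h"
  assumes sol: "weak_sol \<iota> f D a b u u'" and st: "a \<le> s" "s \<le> t" "t < b"
    and D: "\<And>\<sigma> x. \<sigma> \<in> {a..b} \<Longrightarrow> D \<sigma> x = c *\<^sub>R P \<sigma> (Ps \<sigma> x)"
    and adj: "\<And>\<sigma>. \<sigma> \<in> {a..b} \<Longrightarrow> Bstar_of (P \<sigma>) (Ps \<sigma>)"
    and cP: "continuous_on {a..b} P"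
    and F_deriv: "\<And>x. (F has_derivative (\<lambda>v. inner (f x) (\<iota> v))) (at x)"
    and lip: "\<And>R. \<exists>L. L-lipschitz_on (cball 0 R) f"
  shows "((\<lambda>\<sigma>. - c * (norm (Ps \<sigma> (u' \<sigma>)))\<^sup>2) has_integral energy F u u' t - energy F u u' s) {s..t}"
proof -
  note W = weak_solD[OF sol]
  have "continuous_on {a..b} (\<lambda>\<sigma>. f (u \<sigma>))"
    by (rule continuous_on_compose2[OF continuous_on_UNIV_of_lipschitz_on_cball[OF lip] W(2)]) auto
  moreover have "continuous_on {a..b} (\<lambda>\<sigma>. P \<sigma> (Ps \<sigma> (u' \<sigma>)))"
    by (intro blinfun.continuous_on[OF cP] blinfun.continuous_on[OF continuous_on_Bstar_of[OF cP adj] W(3)])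
  ultimately have "continuous_on {a..b} (\<lambda>\<sigma>. f (u \<sigma>) - c *\<^sub>R P \<sigma> (Ps \<sigma> (u' \<sigma>)))"
    by (intro continuous_on_diff continuous_on_scaleR continuous_on_const)
  then have ck: "continuous_on {a..b} (\<lambda>\<sigma>. f (u \<sigma>) - D \<sigma> (u' \<sigma>))"
    by (rule continuous_on_eq) (simp add: D)
  have "quadratic_energy (u t) (u' t) - quadratic_energy (u s) (u' s) - (F (u t) - F (u s))
      = energy F u u' t - energy F u u' s"
    by (simp add: energy_eq_quadratic_energy)
  with has_integral_diff[OF weak_sol_quadratic_energy_identity[OF sol st ck]
      potential_chain_rule[OF st W(2,3,4) F_deriv lip]]
  have int: "((\<lambda>\<sigma>. inner (f (u \<sigma>) - D \<sigma> (u' \<sigma>)) (u' \<sigma>) - inner (f (u \<sigma>)) (u' \<sigma>)) has_integral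
      energy F u u' t - energy F u u' s) {s..t}"
    by (simp only:)
  have "inner (f (u \<sigma>) - D \<sigma> (u' \<sigma>)) (u' \<sigma>) - inner (f (u \<sigma>)) (u' \<sigma>)
      = - c * (norm (Ps \<sigma> (u' \<sigma>)))\<^sup>2" if "\<sigma> \<in> {s..t}" for \<sigma>
  proof -
    have "inner (P \<sigma> (Ps \<sigma> (u' \<sigma>))) (u' \<sigma>) = (norm (Ps \<sigma> (u' \<sigma>)))\<^sup>2"
      using adj[of \<sigma>] that st unfolding Bstar_of_def by (simp add: power2_norm_eq_inner)
    then show ?thesis
      using D[of \<sigma> "u' \<sigma>"] that st by (simp add: inner_diff_left)
  qed
  then show ?thesis
    by (rule has_integral_eq[OF _ int])
qed

lemma energy_nonneg:
  assumes "\<And>x. F x \<le> 0"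
  shows "0 \<le> energy F u u' t"
proof -
  have "0 \<le> 1/2 * ((norm (u t))\<^sup>2 + (norm (u' t))\<^sup>2)" by simp
  with assms[of "u t"] show ?thesis
    unfolding energy_def by linarith
qed

lemma continuous_on_energy:
  assumes "weak_sol \<iota> f D a b u u'" and "\<And>x. (F has_derivative F' x) (at x)"
  shows "continuous_on {a..b} (energy F u u')"
proof -
  have "continuous_on UNIV F"
    using has_derivative_continuous[OF assms(2)] by (simp add: continuous_at_imp_continuous_on)
  then have "continuous_on {a..b} (\<lambda>\<tau>. F (u \<tau>))"
    by (rule continuous_on_compose2[OF _ weak_solD(2)[OF assms(1)]]) auto
  with weak_solD(2,3)[OF assms(1)] show ?thesis
    unfolding energy_def by (intro continuous_intros)
qed

lemma energy_identity_before_endpoint: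
  fixes \<iota> :: "'v::{real_inner,complete_space} \<Rightarrow>\<^sub>L 'h::{real_inner,complete_space}"
    and P :: "real \<Rightarrow> ('p::real_inner \<Rightarrow>\<^sub>L 'h)" and Ps :: "real \<Rightarrow> ('h \<Rightarrow>\<^sub>L 'p)"
    and u :: "real \<Rightarrow> 'v" and u' :: "real \<Rightarrow> 'h"
  assumes sol: "\<And>b. 0 \<le> b \<Longrightarrow> weak_sol \<iota> f D 0 b u u'" and "0 \<le> a" "a \<le> c" "c < b"
    and D: "\<And>\<sigma> x. \<sigma> \<in> {a..<b} \<Longrightarrow> D \<sigma> x = \<gamma> *\<^sub>R P \<sigma> (Ps \<sigma> x)"
    and adj: "\<And>\<sigma>. Bstar_of (P \<sigma>) (Ps \<sigma>)"
    and G: "continuous_on {a..b} G" "\<And>\<sigma>. \<sigma> \<in> {a..<b} \<Longrightarrow> G \<sigma> = P \<sigma>"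
    and F_deriv: "\<And>x. (F has_derivative (\<lambda>v. inner (f x) (\<iota> v))) (at x)"
    and lip: "\<And>R. \<exists>L. L-lipschitz_on (cball 0 R) f"
  shows "((\<lambda>\<sigma>. - \<gamma> * (norm (Ps \<sigma> (u' \<sigma>)))\<^sup>2) has_integral energy F u u' c - energy F u u' a) {a..c}"
proof -
  \<comment> \<open>the Steklov argument needs room to the right of \<open>c\<close> on which \<open>D\<close> has the form \<open>\<gamma> P P*\<close>\<close>
  define b' where "b' = (c + b) / 2"
  have b': "c < b'" "b' < b" using \<open>c < b\<close> by (auto simp: b'_def)
  have ws: "weak_sol \<iota> f D a b' u u'"
    using b' \<open>0 \<le> a\<close> \<open>a \<le> c\<close> by (intro weak_sol_subinterval[OF sol[of b']]) auto
  have cP: "continuous_on {a..b'} P"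
  proof (rule continuous_on_eq)
    show "continuous_on {a..b'} G"
      by (rule continuous_on_subset[OF G(1)]) (use b' in auto)
  qed (use G(2) b' in auto)
  show ?thesis
  proof (rule weak_sol_energy_identity[OF ws order_refl \<open>a \<le> c\<close> b'(1) _ _ cP F_deriv lip])
    show "D \<sigma> x = \<gamma> *\<^sub>R P \<sigma> (Ps \<sigma> x)" if "\<sigma> \<in> {a..b'}" for \<sigma> x
      using D that b' by simp
  qed (rule adj)
qed

section \<open>Comparison lemmas on an interval\<close>

lemma continuous_on_Icc_le_right_endpoint:
  fixes \<phi> \<psi> :: "real \<Rightarrow> real"
  assumes "x < b" "continuous_on {x..b} \<phi>" "continuous_on {x..b} \<psi>"
    and "\<And>c. x \<le> c \<Longrightarrow> c < b \<Longrightarrow> \<phi> c \<le> \<psi> c"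
  shows "\<phi> b \<le> \<psi> b"
proof (rule tendsto_le[OF trivial_limit_at_left_real])
  show "(\<psi> \<longlongrightarrow> \<psi> b) (at_left b)" "(\<phi> \<longlongrightarrow> \<phi> b) (at_left b)"
    using continuous_on_Icc_at_leftD assms(1-3) by blast+
  show "\<forall>\<^sub>F c in at_left b. \<phi> c \<le> \<psi> c"
    using eventually_at_left_real[OF assms(1)] by eventually_elim (auto intro: assms(4))
qed

lemma has_integral_right_endpoint:
  fixes E g :: "real \<Rightarrow> real"
  assumes "a < b" and cE: "continuous_on {a..b} E" and g: "g integrable_on {a..b}"
    and hi: "\<And>c. a \<le> c \<Longrightarrow> c < b \<Longrightarrow> (g has_integral E c - E a) {a..c}"
  shows "(g has_integral E b - E a) {a..b}"
proof -
  have cI: "continuous_on {a..b} (\<lambda>c. E a + integral {a..c} g)"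
    by (rule continuous_on_add[OF continuous_on_const indefinite_integral_continuous_1[OF g]])
  have eq: "E c = E a + integral {a..c} g" if "a \<le> c" "c < b" for c
    using integral_unique[OF hi[OF that]] by simp
  have "E b \<le> E a + integral {a..b} g"
    by (rule continuous_on_Icc_le_right_endpoint[OF \<open>a < b\<close> cE cI]) (metis eq order_refl)
  moreover have "E a + integral {a..b} g \<le> E b"
    by (rule continuous_on_Icc_le_right_endpoint[OF \<open>a < b\<close> cI cE]) (metis eq order_refl)
  ultimately
  have "E b - E a = integral {a..b} g" by linarith
  then show ?thesis
    using integrable_integral[OF g] by simp
qed

lemma le_left_endpoint_of_nonpos_rate:
  fixes E g :: "real \<Rightarrow> real"
  assumes "a < b" and cE: "continuous_on {a..b} E"
    and hi: "\<And>c. a \<le> c \<Longrightarrow> c < b \<Longrightarrow> ((\<lambda>\<sigma>. - g \<sigma>) has_integral E c - E a) {a..c}"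
    and gnn: "\<And>\<sigma>. 0 \<le> g \<sigma>" and "\<tau> \<in> {a..b}"
  shows "E \<tau> \<le> E a"
proof -
  have le: "E c \<le> E a" if "a \<le> c" "c < b" for c
  proof -
    have "(g has_integral - (E c - E a)) {a..c}"
      using has_integral_neg[OF hi[OF that]] by simp
    then have "0 \<le> - (E c - E a)"
      by (rule has_integral_nonneg) (rule gnn)
    then show ?thesis by simp
  qed
  show ?thesis
  proof (cases "\<tau> < b")
    case False
    have "E b \<le> (\<lambda>_. E a) b"
      by (rule continuous_on_Icc_le_right_endpoint[OF \<open>a < b\<close> cE continuous_on_const]) (use le in auto)
    with False \<open>\<tau> \<in> {a..b}\<close> show ?thesis by auto
  qed (use le \<open>\<tau> \<in> {a..b}\<close> in auto)
qed

lemma decay_of_observability_inequality: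
  fixes E g :: "real \<Rightarrow> real"
  assumes "a < b" and cE: "continuous_on {a..b} E"
    and hi: "\<And>c. a \<le> c \<Longrightarrow> c < b \<Longrightarrow> ((\<lambda>\<sigma>. - g \<sigma>) has_integral E c - E a) {a..c}"
    and "0 \<le> E a" and obs: "E b \<le> d * integral {a..b} g" and "0 < d"
  shows "E b \<le> d / (d + 1) * E a"
proof (cases "g integrable_on {a..b}")
  case True
  then have "((\<lambda>\<sigma>. - g \<sigma>) has_integral E b - E a) {a..b}"
    by (intro has_integral_right_endpoint[OF \<open>a < b\<close> cE] integrable_neg hi)
  from has_integral_neg[OF this] have "(g has_integral E a - E b) {a..b}"
    by simp
  then have "integral {a..b} g = E a - E b"
    by (rule integral_unique)
  with obs have "E b * (d + 1) \<le> d * E a"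
    by (simp add: algebra_simps)
  with \<open>0 < d\<close> show ?thesis
    by (simp add: field_simps)
next
  case False
  \<comment> \<open>then the integral is the junk value 0\<close>
  with obs have "E b \<le> 0"
    by (simp add: not_integrable_integral)
  moreover have "0 \<le> d / (d + 1) * E a"
    using \<open>0 < d\<close> \<open>0 \<le> E a\<close> by simp
  ultimately show ?thesis by linarith
qed

lemma le_right_endpoint_of_nonneg_rate:
  fixes E g :: "real \<Rightarrow> real"
  assumes "a < b" and cE: "continuous_on {a..b} E"
    and hi: "\<And>c. a \<le> c \<Longrightarrow> c < b \<Longrightarrow> (g has_integral E c - E a) {a..c}"
    and gnn: "\<And>\<sigma>. 0 \<le> g \<sigma>" and \<tau>: "\<tau> \<in> {a..b}"
  shows "E \<tau> \<le> E b"
proof (cases "\<tau> < b")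
  case True
  have "E \<tau> - E a \<le> E c - E a" if "\<tau> \<le> c" "c < b" for c
    by (rule has_integral_subset_le[OF _ hi hi]) (use that \<tau> True gnn in auto)
  then have le: "E \<tau> \<le> E c" if "\<tau> \<le> c" "c < b" for c
    using that by simp
  have "continuous_on {\<tau>..b} E"
    using \<tau> by (intro continuous_on_subset[OF cE]) auto
  from continuous_on_Icc_le_right_endpoint[OF True continuous_on_const this le]
  show ?thesis .
qed (use \<tau> in auto)

lemma gronwall_inequality:
  fixes E g :: "real \<Rightarrow> real"
  assumes "a < b" and cE: "continuous_on {a..b} E"
    and hi: "\<And>c. a \<le> c \<Longrightarrow> c < b \<Longrightarrow> (g has_integral E c - E a) {a..c}"
    and cg: "\<And>c. a \<le> c \<Longrightarrow> c < b \<Longrightarrow> continuous_on {a..c} g"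
    and gle: "\<And>\<sigma>. a \<le> \<sigma> \<Longrightarrow> \<sigma> < b \<Longrightarrow> g \<sigma> \<le> K * E \<sigma>"
  shows "E b \<le> exp (K * (b - a)) * E a"
proof -
  have le: "E c \<le> exp (K * (c - a)) * E a" if c: "a \<le> c" "c < b" for c
  proof -
    define \<phi> where "\<phi> \<tau> = exp (- K * \<tau>) * E \<tau>" for \<tau>
    define \<phi>' where "\<phi>' \<tau> = exp (- K * \<tau>) * (g \<tau> - K * E \<tau>)" for \<tau>
    have E: "E a + integral {a..u} g = E u" if "u \<in> {a..c}" for u
    proof -
      have "a \<le> u" "u < b" using that c by auto
      from integral_unique[OF hi[OF this]] show ?thesis by simp
    qed
    have "(E has_real_derivative g \<tau>) (at \<tau> within {a..c})" if \<tau>: "\<tau> \<in> {a..c}" for \<tau>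
    proof -
      have "((\<lambda>u. E a + integral {a..u} g) has_vector_derivative g \<tau>) (at \<tau> within {a..c})"
        using has_vector_derivative_add[OF has_vector_derivative_const
            integral_has_vector_derivative[OF cg[OF c] \<tau>]] by simp
      then have "(E has_vector_derivative g \<tau>) (at \<tau> within {a..c})"
        by (rule has_vector_derivative_transform_within[OF _ zero_less_one \<tau>]) (simp add: E)
      then show ?thesis
        by (simp add: has_real_derivative_iff_has_vector_derivative)
    qed
    then have int: "(\<phi>' has_integral (\<phi> c - \<phi> a)) {a..c}"
    proof (intro fundamental_theorem_of_calculus[OF c(1)])
      fix \<tau> assume \<tau>: "\<tau> \<in> {a..c}"
      assume "\<And>\<tau>. \<tau> \<in> {a..c} \<Longrightarrow> (E has_real_derivative g \<tau>) (at \<tau> within {a..c})"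
      from this[OF \<tau>] have "(\<phi> has_real_derivative
          exp (- K * \<tau>) * (- K) * E \<tau> + exp (- K * \<tau>) * g \<tau>) (at \<tau> within {a..c})"
        unfolding \<phi>_def by (auto intro!: derivative_eq_intros)
      then show "(\<phi> has_vector_derivative \<phi>' \<tau>) (at \<tau> within {a..c})"
        unfolding \<phi>'_def has_real_derivative_iff_has_vector_derivative[symmetric]
        by (simp add: algebra_simps)
    qed
    have "0 \<le> - \<phi>' \<tau>" if "\<tau> \<in> {a..c}" for \<tau>
    proof -
      have "g \<tau> - K * E \<tau> \<le> 0" using gle[of \<tau>] that c by simp
      then show ?thesis unfolding \<phi>'_def by (simp add: mult_nonneg_nonpos)
    qed
    then have "0 \<le> - (\<phi> c - \<phi> a)"
      by (rule has_integral_nonneg[OF has_integral_neg[OF int]])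
    then have "exp (K * c) * (exp (- K * c) * E c) \<le> exp (K * c) * (exp (- K * a) * E a)"
      unfolding \<phi>_def by (intro mult_left_mono) auto
    moreover have "exp (K * c) * (exp (- K * c) * E c) = E c"
      by (simp add: mult.assoc[symmetric] exp_add[symmetric])
    moreover have "exp (K * c) * (exp (- K * a) * E a) = exp (K * (c - a)) * E a"
      by (simp add: mult.assoc[symmetric] exp_add[symmetric] right_diff_distrib)
    ultimately show ?thesis by (simp only:)
  qed
  have "continuous_on {a..b} (\<lambda>c. exp (K * (c - a)) * E a)"
    by (intro continuous_intros)
  from continuous_on_Icc_le_right_endpoint[OF \<open>a < b\<close> cE this le]
  show ?thesis by simp
qed

section \<open>Energy on damped and anti-damped intervals\<close>

lemma energy_decay_damped_interval:
  fixes \<iota> :: "'v::{real_inner,complete_space} \<Rightarrow>\<^sub>L 'h::{real_inner,complete_space}"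
    and B1 :: "real \<Rightarrow> ('u1::real_inner \<Rightarrow>\<^sub>L 'h)" and B1s :: "real \<Rightarrow> ('h \<Rightarrow>\<^sub>L 'u1)"
    and B3 :: "real \<Rightarrow> ('u3::real_inner \<Rightarrow>\<^sub>L 'h)" and B3s :: "real \<Rightarrow> ('h \<Rightarrow>\<^sub>L 'u3)"
    and u :: "real \<Rightarrow> 'v" and u' :: "real \<Rightarrow> 'h" and F :: "'v \<Rightarrow> real"
  defines "E \<equiv> energy F u u'"
  assumes sol: "\<And>b. 0 \<le> b \<Longrightarrow> weak_sol \<iota> f (\<lambda>s x. B1 s (B1s s x) - B3 s (B3s s x)) 0 b u u'"
    and "0 \<le> a" "a < b"
    and B1s_adj: "\<And>s. Bstar_of (B1 s) (B1s s)" and B3_zero: "\<And>s. s \<in> {a..<b} \<Longrightarrow> B3 s = 0"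
    and G: "continuous_on {a..b} G" "\<And>s. s \<in> {a..<b} \<Longrightarrow> G s = B1 s"
    and F_deriv: "\<And>x. (F has_derivative (\<lambda>v. inner (f x) (\<iota> v))) (at x)"
    and lip: "\<And>R. \<exists>L. L-lipschitz_on (cball 0 R) f" and F_nonpos: "\<And>x. F x \<le> 0"
    and "0 < d"
    and obs: "weak_sol \<iota> f (\<lambda>s x. B1 s (B1s s x)) a b u u' \<Longrightarrow>
      E b \<le> d * integral {a..b} (\<lambda>s. (norm (B1s s (u' s)))\<^sup>2)"
  shows "E b \<le> d / (d + 1) * E a" and "\<And>\<tau>. \<tau> \<in> {a..b} \<Longrightarrow> E \<tau> \<le> E a"
proof -
  have sol_b: "weak_sol \<iota> f (\<lambda>s x. B1 s (B1s s x) - B3 s (B3s s x)) 0 b u u'"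
    using sol \<open>0 \<le> a\<close> \<open>a < b\<close> by simp
  have cE: "continuous_on {a..b} E"
    unfolding E_def using \<open>0 \<le> a\<close>
    by (intro continuous_on_subset[OF continuous_on_energy[OF sol_b F_deriv]]) auto
  have hi: "((\<lambda>\<sigma>. - (norm (B1s \<sigma> (u' \<sigma>)))\<^sup>2) has_integral E c - E a) {a..c}"
    if "a \<le> c" "c < b" for c
    using energy_identity_before_endpoint[OF sol \<open>0 \<le> a\<close> that _ B1s_adj G F_deriv lip, of 1] B3_zero
    by (simp add: E_def)
  have "weak_sol \<iota> f (\<lambda>s x. B1 s (B1s s x)) a b u u'"
    using \<open>0 \<le> a\<close> \<open>a < b\<close> B3_zero by (intro weak_sol_subinterval[OF sol_b]) auto
  then show "E b \<le> d / (d + 1) * E a"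
    using \<open>0 \<le> a\<close> F_nonpos
    by (intro decay_of_observability_inequality[OF \<open>a < b\<close> cE hi _ obs \<open>0 < d\<close>])
      (auto simp: E_def energy_nonneg)
  show "E \<tau> \<le> E a" if "\<tau> \<in> {a..b}" for \<tau>
    by (rule le_left_endpoint_of_nonpos_rate[OF \<open>a < b\<close> cE hi _ that]) auto
qed

lemma energy_growth_antidamped_interval:
  fixes \<iota> :: "'v::{real_inner,complete_space} \<Rightarrow>\<^sub>L 'h::{real_inner,complete_space}"
    and B1 :: "real \<Rightarrow> ('u1::real_inner \<Rightarrow>\<^sub>L 'h)" and B1s :: "real \<Rightarrow> ('h \<Rightarrow>\<^sub>L 'u1)"
    and B3 :: "real \<Rightarrow> ('u3::real_inner \<Rightarrow>\<^sub>L 'h)" and B3s :: "real \<Rightarrow> ('h \<Rightarrow>\<^sub>L 'u3)"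
    and u :: "real \<Rightarrow> 'v" and u' :: "real \<Rightarrow> 'h" and F :: "'v \<Rightarrow> real"
  defines "E \<equiv> energy F u u'"
  assumes sol: "\<And>b. 0 \<le> b \<Longrightarrow> weak_sol \<iota> f (\<lambda>s x. B1 s (B1s s x) - B3 s (B3s s x)) 0 b u u'"
    and "0 \<le> a" "a < b"
    and B3s_adj: "\<And>s. Bstar_of (B3 s) (B3s s)" and B1_zero: "\<And>s. s \<in> {a..<b} \<Longrightarrow> B1 s = 0"
    and G: "continuous_on {a..b} G" "\<And>s. s \<in> {a..<b} \<Longrightarrow> G s = B3 s"
    and F_deriv: "\<And>x. (F has_derivative (\<lambda>v. inner (f x) (\<iota> v))) (at x)"
    and lip: "\<And>R. \<exists>L. L-lipschitz_on (cball 0 R) f" and F_nonpos: "\<And>x. F x \<le> 0"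
    and "0 \<le> C" "0 \<le> M" and emb: "\<And>x. (norm (j x))\<^sup>2 \<le> C * (norm x)\<^sup>2"
    and B3s_bound: "\<And>s x. s \<in> {a..<b} \<Longrightarrow> (norm (B3s s x))\<^sup>2 \<le> M * (norm (j x))\<^sup>2"
  shows "E b \<le> exp (2 * C * M * (b - a)) * E a" and "\<And>\<tau>. \<tau> \<in> {a..b} \<Longrightarrow> E \<tau> \<le> E b"
proof -
  define g where "g = (\<lambda>\<sigma>. (norm (B3s \<sigma> (u' \<sigma>)))\<^sup>2)"
  have sol_b: "weak_sol \<iota> f (\<lambda>s x. B1 s (B1s s x) - B3 s (B3s s x)) 0 b u u'"
    using sol \<open>0 \<le> a\<close> \<open>a < b\<close> by simp
  have cE: "continuous_on {a..b} E"
    unfolding E_def using \<open>0 \<le> a\<close>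
    by (intro continuous_on_subset[OF continuous_on_energy[OF sol_b F_deriv]]) auto
  have hi: "(g has_integral E c - E a) {a..c}" if "a \<le> c" "c < b" for c
    using energy_identity_before_endpoint[OF sol \<open>0 \<le> a\<close> that _ B3s_adj G F_deriv lip, of "-1"] B1_zero
    by (simp add: E_def g_def)
  have cg: "continuous_on {a..c} g" if "a \<le> c" "c < b" for c
  proof -
    have "continuous_on {a..c} B3"
    proof (rule continuous_on_eq)
      show "continuous_on {a..c} G"
        by (rule continuous_on_subset[OF G(1)]) (use that in auto)
    qed (use G(2) that in auto)
    then have "continuous_on {a..c} B3s"
      by (rule continuous_on_Bstar_of[OF _ B3s_adj])
    moreover have "continuous_on {a..c} u'"
      using weak_solD(3)[OF sol_b] \<open>0 \<le> a\<close> that by (auto intro: continuous_on_subset)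
    ultimately show ?thesis
      unfolding g_def by (intro continuous_on_power continuous_on_norm blinfun.continuous_on)
  qed
  have gle: "g \<sigma> \<le> 2 * C * M * E \<sigma>" if "a \<le> \<sigma>" "\<sigma> < b" for \<sigma>
  proof -
    have "g \<sigma> \<le> M * (norm (j (u' \<sigma>)))\<^sup>2"
      unfolding g_def using that by (intro B3s_bound) auto
    also have "\<dots> \<le> M * (C * (norm (u' \<sigma>))\<^sup>2)"
      by (intro mult_left_mono emb \<open>0 \<le> M\<close>)
    also have "\<dots> \<le> M * (C * (2 * E \<sigma>))"
    proof (intro mult_left_mono \<open>0 \<le> M\<close> \<open>0 \<le> C\<close>)
      have "0 \<le> (norm (u \<sigma>))\<^sup>2" by simp
      with F_nonpos[of "u \<sigma>"] show "(norm (u' \<sigma>))\<^sup>2 \<le> 2 * E \<sigma>"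
        unfolding E_def energy_def by (simp add: algebra_simps, linarith)
    qed
    finally show ?thesis by (simp add: mult_ac)
  qed
  show "E b \<le> exp (2 * C * M * (b - a)) * E a"
    using gronwall_inequality[OF \<open>a < b\<close> cE hi cg gle] .
  show "E \<tau> \<le> E b" if "\<tau> \<in> {a..b}" for \<tau>
    by (rule le_right_endpoint_of_nonneg_rate[OF \<open>a < b\<close> cE hi _ that]) (auto simp: g_def)
qed

section \<open>Alternating decay and growth\<close>

lemma tendsto_zero_of_exp_sum_bound:
  fixes P x :: "nat \<Rightarrow> real"
  assumes nonneg: "\<And>n. 0 \<le> P n" and step: "\<And>n. P (Suc n) \<le> exp (x n) * P n"
    and sum: "filterlim (\<lambda>N. \<Sum>n<N. x n) at_bot sequentially"
  shows "P \<longlonglongrightarrow> 0"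
proof -
  have bound: "P N \<le> exp (\<Sum>n<N. x n) * P 0" for N
  proof (induction N)
    case (Suc N)
    have "P (Suc N) \<le> exp (x N) * P N" by (rule step)
    also have "\<dots> \<le> exp (x N) * (exp (\<Sum>n<N. x n) * P 0)"
      using Suc by (intro mult_left_mono) auto
    also have "\<dots> = exp (\<Sum>n<Suc N. x n) * P 0"
      by (simp add: exp_add mult_ac)
    finally show ?case .
  qed simp
  have "(\<lambda>N. exp (\<Sum>n<N. x n)) \<longlonglongrightarrow> 0"
    using filterlim_compose[OF exp_at_bot sum] by (simp add: o_def)
  then have "(\<lambda>N. exp (\<Sum>n<N. x n) * P 0) \<longlonglongrightarrow> 0"
    by (rule tendsto_mult_left_zero)
  with nonneg bound show ?thesis
    by (intro tendsto_sandwich[OF _ _ tendsto_const, of _ P]) (auto intro!: always_eventually)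
qed

lemma ex_bracketing_index:
  fixes t :: "nat \<Rightarrow> real"
  assumes "filterlim t at_top sequentially" and "t 0 \<le> \<tau>"
  shows "\<exists>k. t k \<le> \<tau> \<and> \<tau> < t (Suc k)"
proof -
  have "\<exists>K. \<tau> < t K"
    using assms(1) by (simp add: filterlim_at_top_dense eventually_sequentially) (meson le_refl)
  then have lt: "\<tau> < t (LEAST K. \<tau> < t K)"
    by (rule LeastI_ex)
  have "(LEAST K. \<tau> < t K) \<noteq> 0"
  proof
    assume "(LEAST K. \<tau> < t K) = 0"
    with lt assms(2) show False by simp
  qed
  then obtain k where "(LEAST K. \<tau> < t K) = Suc k"
    using not0_implies_Suc by blast
  moreover have "\<not> \<tau> < t k"
    using not_less_Least[of k "\<lambda>K. \<tau> < t K"] calculation by simp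
  ultimately show ?thesis
    using lt by (intro exI[of _ k]) simp
qed

lemma tendsto_at_top_of_alternating_bounds:
  fixes E :: "real \<Rightarrow> real" and t :: "nat \<Rightarrow> real"
  assumes mono: "strict_mono t" and unbounded: "filterlim t at_top sequentially"
    and nonneg: "\<And>\<tau>. 0 \<le> E \<tau>" and P: "P \<longlonglongrightarrow> 0"
    and even: "\<And>n \<tau>. t (2*n) \<le> \<tau> \<Longrightarrow> \<tau> \<le> t (2*n+1) \<Longrightarrow> E \<tau> \<le> P n"
    and odd: "\<And>n \<tau>. t (2*n+1) \<le> \<tau> \<Longrightarrow> \<tau> \<le> t (2*n+2) \<Longrightarrow> E \<tau> \<le> P (Suc n)"
  shows "(E \<longlongrightarrow> 0) at_top"
proof (rule tendstoI)
  fix e :: real assume "e > 0"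
  with P have "\<forall>\<^sub>F n in sequentially. dist (P n) 0 < e"
    by (rule tendstoD)
  then obtain N where N: "\<And>n. n \<ge> N \<Longrightarrow> P n < e"
    unfolding eventually_sequentially dist_real_def by force
  have "E \<tau> < e" if \<tau>: "\<tau> \<ge> t (2*N)" for \<tau>
  proof -
    have "t 0 \<le> t (2*N)"
      using mono by (simp add: strict_mono_less_eq)
    then obtain k where k: "t k \<le> \<tau>" "\<tau> < t (Suc k)"
      using ex_bracketing_index[OF unbounded, of \<tau>] \<tau> by auto
    have "2*N < Suc k"
    proof (rule ccontr)
      assume "\<not> 2*N < Suc k"
      then have "t (Suc k) \<le> t (2*N)"
        using mono by (simp add: strict_mono_less_eq)
      with k \<tau> show False by simp
    qed
    then show ?thesis
    proof (cases "even k")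
      case True
      then obtain n where "k = 2*n" by blast
      with k \<open>2*N < Suc k\<close> show ?thesis
        using even[of n \<tau>] N[of n] by simp
    next
      case False
      then obtain n where "k = 2*n+1" using oddE by blast
      with k \<open>2*N < Suc k\<close> show ?thesis
        using odd[of n \<tau>] N[of "Suc n"] by simp
    qed
  qed
  then show "\<forall>\<^sub>F \<tau> in at_top. dist (E \<tau>) 0 < e"
    unfolding eventually_at_top_linorder using nonneg by (auto simp: dist_real_def)
qed

lemma tendsto_zero_of_alternating_decay_growth:
  fixes E :: "real \<Rightarrow> real" and t :: "nat \<Rightarrow> real"
  assumes mono: "strict_mono t" and unbounded: "filterlim t at_top sequentially"
    and nonneg: "\<And>\<tau>. 0 \<le> E \<tau>" and q: "\<And>n. 0 < q n"
    and decay: "\<And>n. E (t (2*n+1)) \<le> q n * E (t (2*n))"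
    and decay_mono: "\<And>n \<tau>. \<tau> \<in> {t (2*n)..t (2*n+1)} \<Longrightarrow> E \<tau> \<le> E (t (2*n))"
    and growth: "\<And>n. E (t (2*n+2)) \<le> exp (r n) * E (t (2*n+1))"
    and growth_mono: "\<And>n \<tau>. \<tau> \<in> {t (2*n+1)..t (2*n+2)} \<Longrightarrow> E \<tau> \<le> E (t (2*n+2))"
    and sum: "filterlim (\<lambda>N. \<Sum>n<N. r n + ln (q n)) at_bot sequentially"
  shows "(E \<longlongrightarrow> 0) at_top"
proof -
  have "E (t (2 * Suc n)) \<le> exp (r n + ln (q n)) * E (t (2*n))" for n
  proof -
    have "E (t (2*n+2)) \<le> exp (r n) * (q n * E (t (2*n)))"
      using growth[of n] mult_left_mono[OF decay[of n], of "exp (r n)"] by (meson exp_ge_zero order_trans)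
    with q[of n] show ?thesis
      by (simp add: exp_add mult_ac)
  qed
  then have "(\<lambda>n. E (t (2*n))) \<longlonglongrightarrow> 0"
    by (rule tendsto_zero_of_exp_sum_bound[OF nonneg _ sum])
  then show ?thesis
    by (rule tendsto_at_top_of_alternating_bounds[OF mono unbounded nonneg])
      (use decay_mono growth_mono in auto)
qed

theorem theorem4p3:
  fixes \<iota> :: "'v::{real_inner,complete_space} \<Rightarrow>\<^sub>L 'h::{real_inner,complete_space}"
    and B1 :: "real \<Rightarrow> ('u1::{real_inner,complete_space} \<Rightarrow>\<^sub>L 'h)"
    and B1s :: "real \<Rightarrow> ('h \<Rightarrow>\<^sub>L 'u1)"
    and B3 :: "real \<Rightarrow> ('u3::{real_inner,complete_space} \<Rightarrow>\<^sub>L 'h)"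
    and B3s :: "real \<Rightarrow> ('h \<Rightarrow>\<^sub>L 'u3)"
    and j1 :: "'h \<Rightarrow>\<^sub>L 'w1::{real_inner,complete_space}"
    and j3 :: "'h \<Rightarrow>\<^sub>L 'w3::{real_inner,complete_space}"
    and C1 C3 :: real
    and f :: "'v \<Rightarrow> 'h" and F :: "'v \<Rightarrow> real"
    and t :: "nat \<Rightarrow> real"
    and m M :: "nat \<Rightarrow> real"
    and Tbar d :: "nat \<Rightarrow> real"
    and u :: "real \<Rightarrow> 'v" and u' :: "real \<Rightarrow> 'h"
  assumes \<iota>_inj: "inj (blinfun_apply \<iota>)"
    and \<iota>_dense: "closure (range (blinfun_apply \<iota>)) = UNIV"
    and t0: "t 0 = 0" and t_mono: "strict_mono t"
    and t_inf: "filterlim t at_top sequentially"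
    and B1s_adj: "\<And>s. Bstar_of (B1 s) (B1s s)"
    and B3s_adj: "\<And>s. Bstar_of (B3 s) (B3s s)"
    and B3_zero: "\<And>n s. s \<in> {t (2*n)..<t (2*n+1)} \<Longrightarrow> B3 s = 0"
    and B1_zero: "\<And>n s. s \<in> {t (2*n+1)..<t (2*n+2)} \<Longrightarrow> B1 s = 0"
    and B1_C1: "\<And>n. \<exists>G G'. (\<forall>s\<in>{t (2*n)..<t (2*n+1)}. G s = B1 s) \<and>
                   continuous_on {t (2*n)..t (2*n+1)} G' \<and>
                   (\<forall>s\<in>{t (2*n)..t (2*n+1)}.
                      (G has_vector_derivative G' s) (at s within {t (2*n)..t (2*n+1)}))"
    and B3_C: "\<And>n. \<exists>G. (\<forall>s\<in>{t (2*n+1)..<t (2*n+2)}. G s = B3 s) \<and>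
                   continuous_on {t (2*n+1)..t (2*n+2)} G"
    and j1_inj: "inj (blinfun_apply j1)" and j3_inj: "inj (blinfun_apply j3)"
    and W1_emb: "\<And>x. (norm (j1 x))\<^sup>2 \<le> C1 * (norm x)\<^sup>2"
    and W3_emb: "\<And>x. (norm (j3 x))\<^sup>2 \<le> C3 * (norm x)\<^sup>2"
    and f_loclip: "\<And>R. \<exists>L. \<forall>x y. norm x \<le> R \<longrightarrow> norm y \<le> R \<longrightarrow>
                        norm (f x - f y) \<le> L * norm (x - y)"
    and F0: "F 0 = 0"
    and F_deriv: "\<And>x. (F has_derivative (\<lambda>v. inner (f x) (blinfun_apply \<iota> v))) (at x)"
    and NL1: "\<And>x. F x \<le> 0" "\<And>x. inner (f x) (blinfun_apply \<iota> x) \<le> 0"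
    and cond_j: "\<And>n. 0 < m (2*n) \<and> m (2*n) \<le> M (2*n)"
        "\<And>n s x. s \<in> {t (2*n)..<t (2*n+1)} \<Longrightarrow>
            m (2*n) * (norm (j1 x))\<^sup>2 \<le> (norm (B1s s x))\<^sup>2 \<and>
            (norm (B1s s x))\<^sup>2 \<le> M (2*n) * (norm (j1 x))\<^sup>2"
    and cond_jj: "\<And>n. 0 < M (2*n+1)"
        "\<And>n s x. s \<in> {t (2*n+1)..<t (2*n+2)} \<Longrightarrow>
            (norm (B3s s x))\<^sup>2 \<le> M (2*n+1) * (norm (j3 x))\<^sup>2"
    and obs_T: "\<And>n. Tbar n < t (2*n+1) - t (2*n)"
    and obs: "\<And>n T. Tbar n < T \<Longrightarrow> T \<le> t (2*n+1) - t (2*n) \<Longrightarrow>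
        \<exists>dn>0. \<forall>w w'. weak_sol \<iota> f (\<lambda>s x. B1 s (B1s s x)) (t (2*n)) (t (2*n+1)) w w' \<longrightarrow>
           energy F w w' (t (2*n) + T)
             \<le> dn * integral {t (2*n)..t (2*n) + T} (\<lambda>s. (norm (B1s s (w' s)))\<^sup>2)"
    and d_pos: "\<And>n. 0 < d n"
    and d_obs: "\<And>n w w'. weak_sol \<iota> f (\<lambda>s x. B1 s (B1s s x)) (t (2*n)) (t (2*n+1)) w w' \<Longrightarrow>
           energy F w w' (t (2*n+1))
             \<le> d n * integral {t (2*n)..t (2*n+1)} (\<lambda>s. (norm (B1s s (w' s)))\<^sup>2)"
    and sum_cond: "filterlim (\<lambda>N. \<Sum>n<N. 2 * C3 * M (2*n+1) * (t (2*n+2) - t (2*n+1))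
                                       + ln (d n / (d n + 1))) at_bot sequentially"
    and u_sol: "\<And>b. 0 \<le> b \<Longrightarrow>
        weak_sol \<iota> f (\<lambda>s x. B1 s (B1s s x) - B3 s (B3s s x)) 0 b u u'"
  shows "((\<lambda>s. energy F u u' s) \<longlongrightarrow> 0) at_top"
proof (cases "\<exists>x::'h. x \<noteq> 0")
  \<comment> \<open>only in a nonzero space does \<open>W3_emb\<close> force \<open>0 \<le> C3\<close>\<close>
  case False
  then have "u s = 0" "u' s = 0" for s
    using \<iota>_inj by (auto simp: inj_def)
  then show ?thesis
    by (simp add: energy_def F0)
next
  case True
  then obtain x0 :: 'h where "x0 \<noteq> 0" by blast
  have "0 \<le> C3 * (norm x0)\<^sup>2"
    using W3_emb[of x0] zero_le_power2 order_trans by blast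
  with \<open>x0 \<noteq> 0\<close> have "0 \<le> C3"
    by (simp add: zero_le_mult_iff)
  have lip: "\<And>R. \<exists>L. L-lipschitz_on (cball 0 R) f"
    using f_loclip lipschitz_on_cballI by blast
  have t: "0 \<le> t n" "t n < t (Suc n)" for n
    using t0 strict_mono_less_eq[OF t_mono, of 0 n] t_mono by (auto simp: strict_mono_def)
  show ?thesis
  proof (rule tendsto_zero_of_alternating_decay_growth[OF t_mono t_inf energy_nonneg[OF NL1(1)]
        _ _ _ _ _ sum_cond])
    fix n
    obtain G G' where G: "\<forall>s\<in>{t (2*n)..<t (2*n+1)}. G s = B1 s"
      "\<forall>s\<in>{t (2*n)..t (2*n+1)}. (G has_vector_derivative G' s) (at s within {t (2*n)..t (2*n+1)})"
      using B1_C1[of n] by blast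
    then have "continuous_on {t (2*n)..t (2*n+1)} G"
      using has_vector_derivative_continuous continuous_on_eq_continuous_within by blast
    note decay = energy_decay_damped_interval[OF u_sol t(1) _ B1s_adj _ this _ F_deriv lip NL1(1)
        d_pos d_obs]
    show "energy F u u' (t (2*n+1)) \<le> d n / (d n + 1) * energy F u u' (t (2*n))"
      by (rule decay(1)) (use t(2)[of "2*n"] G(1) B3_zero in auto)
    show "energy F u u' \<tau> \<le> energy F u u' (t (2*n))" if "\<tau> \<in> {t (2*n)..t (2*n+1)}" for \<tau>
      by (rule decay(2)) (use that t(2)[of "2*n"] G(1) B3_zero in auto)
    obtain G where G: "\<forall>s\<in>{t (2*n+1)..<t (2*n+2)}. G s = B3 s" "continuous_on {t (2*n+1)..t (2*n+2)} G"
      using B3_C[of n] by blast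
    note growth = energy_growth_antidamped_interval[OF u_sol t(1) _ B3s_adj _ G(2) _ F_deriv lip NL1(1)
        \<open>0 \<le> C3\<close> _ W3_emb cond_jj(2)]
    show "energy F u u' (t (2*n+2))
        \<le> exp (2 * C3 * M (2*n+1) * (t (2*n+2) - t (2*n+1))) * energy F u u' (t (2*n+1))"
      by (rule growth(1)) (use t(2)[of "2*n+1"] G(1) B1_zero cond_jj(1) in \<open>auto intro: less_imp_le\<close>)
    show "energy F u u' \<tau> \<le> energy F u u' (t (2*n+2))" if "\<tau> \<in> {t (2*n+1)..t (2*n+2)}" for \<tau>
      by (rule growth(2)) (use that t(2)[of "2*n+1"] G(1) B1_zero cond_jj(1) in \<open>auto intro: less_imp_le\<close>)
  qed (intro divide_pos_pos add_pos_pos d_pos zero_less_one)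
qed

end
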